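(* Let $(\mathbb{K},|\cdot|)$ be an algebraically closed normed field, $f\in\mathbb{K}[z]$ a polynomial of degree $n\ge2$, $\xi\in\mathbb{K}^n$ a root-vector of $f$, $N\ge1$ and $1\le p\le\infty$. Suppose $x\in\mathbb{K}^n$ has pairwise distinct components and $E(x)\le R$. Then $f$ has only simple zeros in $\mathbb{K}$, $x\in D_N$, and \[ \|T^{(N)}(x)-\xi\|\preceq\beta_N(E(x))\,\|x-\xi\|. \]
   Context: $a_0$ is the leading coefficient of $f$. For $1\le p\le\infty$, $\|x\|_p=(\sum_i|x_i|^p)^{1/p}$ (max-norm if $p=\infty$). For $x\in\mathbb{K}^n$, $\|x\|=(|x_1|,\dots,|x_n|)\in\mathbb{R}^n$, $\preceq$ the coordinatewise order. $d_i(x)=\min_{j\ne i}|x_i-x_j|$, $d(x)=(d_1(x),\dots,d_n(x))$; for $x\in\mathbb{K}^n$, $y\in\mathbb{R}^n$ with nonzero components, $x/y=(|x_1|/y_1,\dots,|x_n|/y_n)$. A root-vector of $f$ is $\xi$ with $f(z)=a_0\prod_i(z-\xi_i)$ for all $z$. $E(x)=\|(x-\xi)/d(x)\|_p$. Weierstrass-type maps: $T^{(0)}(x)=x$ on $D_0=\mathbb{K}^n$; $D_{N+1}=\{x\in D_N: x_i\ne T^{(N)}_j(x)\ \forall i\ne j\}$, and for $x\in D_{N+1}$, $T^{(N+1)}_i(x)=x_i-\dfrac{f(x_i)}{a_0\prod_{j\ne i}(x_i-T^{(N)}_j(x))}$. Real functions: $\omega(t)=\left(1+\frac{t}{(n-1)^{1/p}}\right)^{n-1}$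 (with $(n-1)^{1/p}=1$ if $p=\infty$), $\Psi(t)=(1+2t)\omega(t)$, $R$ the unique positive solution of $\Psi(t)=2$. On $[0,R]$: $\phi_0\equiv1$, $\omega_N(t)=\left(1+\frac{t\phi_N(t)}{(n-1)^{1/p}}\right)^{n-1}$, $\phi_{N+1}(t)=\frac{\omega_N(t)-1}{1-2t\omega_N(t)}$; for $N\ge1$, $\beta_N(t)=\omega_{N-1}(t)-1$. *)

theory Defs
  imports "HOL-Computational_Algebra.Polynomial" "HOL-Library.Extended_Real"
begin

definition abs_value :: "('a::field \<Rightarrow> real) \<Rightarrow> bool" where
  "abs_value nm \<longleftrightarrow>
     (\<forall>x. nm x \<ge> 0) \<and> (\<forall>x. nm x = 0 \<longleftrightarrow> x = 0) \<and>
     (\<forall>x y. nm (x * y) = nm x * nm y) \<and> (\<forall>x y. nm (x + y) \<le> nm x + nm y)"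

text \<open>Vectors in K^n are functions nat => 'a, only indices 0..n-1 matter.\<close>

definition pnorm :: "ereal \<Rightarrow> nat \<Rightarrow> (nat \<Rightarrow> real) \<Rightarrow> real" where
  "pnorm p n y = (case p of
      ereal q \<Rightarrow> (\<Sum>i<n. \<bar>y i\<bar> powr q) powr (1 / q)
    | _ \<Rightarrow> Max ((\<lambda>i. \<bar>y i\<bar>) ` {..<n}))"

definition dist_i :: "('a \<Rightarrow> real) \<Rightarrow> nat \<Rightarrow> (nat \<Rightarrow> 'a::field) \<Rightarrow> nat \<Rightarrow> real" where
  "dist_i nm n x i = Min ((\<lambda>j. nm (x i - x j)) ` ({..<n} - {i}))"

definition Err :: "('a \<Rightarrow> real) \<Rightarrow> ereal \<Rightarrow> nat \<Rightarrow> (nat \<Rightarrow> 'a::field) \<Rightarrow> (nat \<Rightarrow> 'a) \<Rightarrow> real" where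
  "Err nm p n \<xi> x = pnorm p n (\<lambda>i. nm (x i - \<xi> i) / dist_i nm n x i)"

fun WT :: "'a::field poly \<Rightarrow> nat \<Rightarrow> (nat \<Rightarrow> 'a) \<Rightarrow> (nat \<Rightarrow> 'a)" where
  "WT f 0 x = x"
| "WT f (Suc N) x = (\<lambda>i. x i - poly f (x i) /
      (lead_coeff f * (\<Prod>j\<in>{..<degree f} - {i}. (x i - WT f N x j))))"

fun WD :: "'a::field poly \<Rightarrow> nat \<Rightarrow> (nat \<Rightarrow> 'a) set" where
  "WD f 0 = UNIV"
| "WD f (Suc N) = {x \<in> WD f N. \<forall>i<degree f. \<forall>j<degree f. i \<noteq> j \<longrightarrow> x i \<noteq> WT f N x j}"

definition cp :: "ereal \<Rightarrow> nat \<Rightarrow> real" where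
  "cp p n = (case p of ereal q \<Rightarrow> (real n - 1) powr (1 / q) | _ \<Rightarrow> 1)"

definition omega :: "ereal \<Rightarrow> nat \<Rightarrow> real \<Rightarrow> real" where
  "omega p n t = (1 + t / cp p n) ^ (n - 1)"

definition Psi :: "ereal \<Rightarrow> nat \<Rightarrow> real \<Rightarrow> real" where
  "Psi p n t = (1 + 2 * t) * omega p n t"

definition Rbound :: "ereal \<Rightarrow> nat \<Rightarrow> real" where
  "Rbound p n = (THE t. t > 0 \<and> Psi p n t = 2)"

fun phi :: "ereal \<Rightarrow> nat \<Rightarrow> nat \<Rightarrow> real \<Rightarrow> real"
and omegaN :: "ereal \<Rightarrow> nat \<Rightarrow> nat \<Rightarrow> real \<Rightarrow> real" where
  "phi p n 0 t = 1"
| "phi p n (Suc N) t = (omegaN p n N t - 1) / (1 - 2 * t * omegaN p n N t)"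
| "omegaN p n N t = (1 + t * phi p n N t / cp p n) ^ (n - 1)"

definition beta :: "ereal \<Rightarrow> nat \<Rightarrow> nat \<Rightarrow> real \<Rightarrow> real" where
  "beta p n N t = omegaN p n (N - 1) t - 1"

end

(*
  Write u_j = |x_j - xi_j| / d_j(x), so that E(x) is the p-norm of u. Since f(x_i) = a_0 prod_j (x_i - xi_j),
  one Weierstrass step satisfies

    T^(N+1)_i(x) - xi_i = (x_i - xi_i) (1 - prod_{j ~= i} (1 + (T^(N)_j(x) - xi_j) / (x_i - T^(N)_j(x)))).

  If every |T^(N)_j(x) - xi_j| is at most phi_N(E) u_j |x_i - T^(N)_j(x)|, expanding the product and applying
  AM-GM followed by the power-mean inequality bounds the bracket by omega_N(E) - 1 = beta_{N+1}(E).
  The triangle inequality then gives |x_i - T^(N+1)_j(x)| >= (1 - 2 E omega_N(E)) d_j(x), which is positive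
  because Psi(E) <= 2, and the ratio of the two bounds is exactly phi_{N+1}(E): the hypothesis propagates.
  As omega_0(E) >= 1, positivity at N = 0 already gives 2E < 1; then |xi_i - xi_j| > 0 by the triangle
  inequality through x_i and x_j, so the roots are pairwise distinct, hence simple.
*)

theory Submission
  imports Defs "HOL-Analysis.Convex"
begin

section \<open>Absolute values\<close>

lemma abs_value_nonneg: "abs_value nm \<Longrightarrow> 0 \<le> nm x"
  by (simp add: abs_value_def)

lemma abs_value_eq_0_iff: "abs_value nm \<Longrightarrow> nm x = 0 \<longleftrightarrow> x = 0"
  by (simp add: abs_value_def)

lemma abs_value_pos: "abs_value nm \<Longrightarrow> x \<noteq> 0 \<Longrightarrow> 0 < nm x"
  by (simp add: abs_value_def order_less_le)

lemma abs_value_mult: "abs_value nm \<Longrightarrow> nm (x * y) = nm x * nm y"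
  by (simp add: abs_value_def)

lemma abs_value_add_le: "abs_value nm \<Longrightarrow> nm (x + y) \<le> nm x + nm y"
  by (simp add: abs_value_def)

lemma abs_value_one:
  assumes "abs_value nm"
  shows "nm 1 = 1"
proof -
  have "nm 1 = nm 1 * nm 1"
    using abs_value_mult[OF assms, of 1 1] by simp
  moreover have "nm 1 \<noteq> 0"
    using abs_value_eq_0_iff[OF assms] by simp
  ultimately show ?thesis
    by simp
qed

lemma abs_value_minus:
  assumes "abs_value nm"
  shows "nm (- x) = nm x"
proof -
  have "nm (-1) * nm (-1) = 1"
    using abs_value_mult[OF assms, of "-1" "-1"] abs_value_one[OF assms] by simp
  then have "(nm (-1) - 1) * (nm (-1) + 1) = 0"
    by (simp add: algebra_simps)
  then have "nm (-1) = 1"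
    using abs_value_nonneg[OF assms, of "-1"] by auto
  then show ?thesis
    using abs_value_mult[OF assms, of "-1" x] by simp
qed

lemma abs_value_minus_commute: "abs_value nm \<Longrightarrow> nm (a - b) = nm (b - a)"
  using abs_value_minus[of nm "a - b"] by simp

lemma abs_value_divide:
  assumes "abs_value nm"
  shows "nm (a / b) = nm a / nm b"
proof (cases "b = 0")
  case True
  then show ?thesis
    using abs_value_eq_0_iff[OF assms, of 0] by simp
next
  case False
  then have "nm a = nm (a / b) * nm b"
    using abs_value_mult[OF assms, of "a / b" b] by simp
  moreover have "0 < nm b"
    using False abs_value_pos[OF assms] by blast
  ultimately show ?thesis
    by (simp add: field_simps)
qed

lemma abs_value_diff_triangle: "abs_value nm \<Longrightarrow> nm (a - c) \<le> nm (a - b) + nm (b - c)"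
  using abs_value_add_le[of nm "a - b" "b - c"] by simp

lemma abs_value_prod_one_plus_minus_one_le:
  assumes "abs_value nm" "finite S"
  shows "nm ((\<Prod>j\<in>S. 1 + v j) - 1) \<le> (\<Prod>j\<in>S. 1 + nm (v j)) - 1"
  using assms(2)
proof (induction S rule: finite_induct)
  case empty
  then show ?case
    using abs_value_eq_0_iff[OF assms(1), of 0] by simp
next
  case (insert k S)
  let ?P = "\<Prod>j\<in>S. 1 + v j" and ?Q = "\<Prod>j\<in>S. 1 + nm (v j)"
  have "(\<Prod>j\<in>insert k S. 1 + v j) - 1 = (1 + v k) * (?P - 1) + v k"
    using insert by (simp add: algebra_simps)
  then have "nm ((\<Prod>j\<in>insert k S. 1 + v j) - 1) \<le> nm (1 + v k) * nm (?P - 1) + nm (v k)"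
    using abs_value_add_le[OF assms(1)] abs_value_mult[OF assms(1)] by metis
  also have "nm (1 + v k) * nm (?P - 1) \<le> (1 + nm (v k)) * (?Q - 1)"
    using insert.IH abs_value_add_le[OF assms(1), of 1 "v k"] abs_value_one[OF assms(1)]
    by (intro mult_mono) (auto simp: abs_value_nonneg[OF assms(1)])
  finally show ?case
    using insert by (simp add: algebra_simps)
qed

lemma dist_i_le:
  assumes "j < n" "k < n" "k \<noteq> j"
  shows "dist_i nm n x j \<le> nm (x j - x k)"
  unfolding dist_i_def using assms by (intro Min_le) auto

lemma dist_i_pos:
  assumes "abs_value nm" "2 \<le> n" "j < n" "\<forall>k<n. k \<noteq> j \<longrightarrow> x j \<noteq> x k"
  shows "0 < dist_i nm n x j"
proof -
  have "(if j = 0 then 1 else 0) \<in> {..<n} - {j}"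
    using assms(2) by auto
  then show ?thesis
    unfolding dist_i_def using assms(4) abs_value_pos[OF assms(1)]
    by (subst Min_gr_iff) auto
qed

section \<open>The real functions \<open>\<Psi>\<close>, \<open>\<phi>\<^sub>N\<close> and \<open>\<omega>\<^sub>N\<close>\<close>

declare omegaN.simps [simp del]

lemma cp_pos: "1 \<le> p \<Longrightarrow> 2 \<le> n \<Longrightarrow> 0 < cp p n"
  by (cases p) (auto simp: cp_def)

lemma Psi_less:
  assumes "1 \<le> p" "2 \<le> n" "0 \<le> s" "s < t"
  shows "Psi p n s < Psi p n t"
proof -
  have c: "0 < cp p n"
    using cp_pos assms by blast
  have "(1 + s / cp p n) ^ (n - 1) \<le> (1 + t / cp p n) ^ (n - 1)"
    using assms c by (intro power_mono) (auto simp: divide_right_mono)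
  moreover have "1 \<le> (1 + s / cp p n) ^ (n - 1)"
    using assms c by (simp add: one_le_power)
  ultimately show ?thesis
    unfolding Psi_def omega_def using assms by (intro mult_less_le_imp_less) auto
qed

lemma Rbound:
  assumes "1 \<le> p" "2 \<le> n"
  shows "0 < Rbound p n" "Psi p n (Rbound p n) = 2"
proof -
  have c: "0 < cp p n"
    using cp_pos assms by blast
  have "isCont (Psi p n) t" for t
    unfolding Psi_def omega_def using c by (intro continuous_intros) auto
  moreover have "Psi p n 0 = 1"
    by (simp add: Psi_def omega_def)
  moreover have "3 \<le> Psi p n 1"
    using c by (simp add: Psi_def omega_def one_le_power)
  ultimately obtain r where r: "0 \<le> r" "r \<le> 1" "Psi p n r = 2"
    using IVT[of "Psi p n" 0 2 1] by force
  with \<open>Psi p n 0 = 1\<close> have "0 < r"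
    by (cases "r = 0") auto
  have "Rbound p n = r"
    unfolding Rbound_def
  proof (rule the_equality)
    fix t
    assume "0 < t \<and> Psi p n t = 2"
    then show "t = r"
      using Psi_less[OF assms, of t r] Psi_less[OF assms, of r t] r by fastforce
  qed (use r \<open>0 < r\<close> in auto)
  with r \<open>0 < r\<close> show "0 < Rbound p n" "Psi p n (Rbound p n) = 2"
    by auto
qed

lemma Psi_le_2:
  assumes "1 \<le> p" "2 \<le> n" "0 \<le> t" "t \<le> Rbound p n"
  shows "Psi p n t \<le> 2"
  using Psi_less[OF assms(1-3), of "Rbound p n"] Rbound[OF assms(1,2)] assms(4)
  by (cases "t = Rbound p n") auto

lemma phi_omegaN_bounds:
  assumes "1 \<le> p" "2 \<le> n" "0 \<le> t" "Psi p n t \<le> 2"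
  shows "0 \<le> phi p n N t" "phi p n N t \<le> 1"
    and "1 \<le> omegaN p n N t" "2 * t * omegaN p n N t < 1"
proof -
  have c: "0 < cp p n"
    using cp_pos assms by blast
  have t_omega: "2 * t * omega p n t < 1"
  proof (cases "t = 0")
    case False
    then have "1 < omega p n t"
      unfolding omega_def using assms c by (intro one_less_power) auto
    then show ?thesis
      using assms(4) by (simp add: Psi_def algebra_simps)
  qed simp
  have omegaN: "1 \<le> omegaN p n M t \<and> 2 * t * omegaN p n M t < 1
      \<and> (1 + 2 * t) * omegaN p n M t \<le> 2"
    if "0 \<le> phi p n M t" "phi p n M t \<le> 1" for M
  proof -
    have "omegaN p n M t \<le> omega p n t"
      unfolding omega_def omegaN.simps using that c assms
      by (intro power_mono) (auto simp: divide_right_mono mult_left_le)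
    then have "2 * t * omegaN p n M t \<le> 2 * t * omega p n t"
      and "(1 + 2 * t) * omegaN p n M t \<le> Psi p n t"
      using assms(3) unfolding Psi_def by (auto intro: mult_left_mono)
    moreover have "1 \<le> omegaN p n M t"
      unfolding omegaN.simps using that c assms by (simp add: one_le_power)
    ultimately show ?thesis
      using t_omega assms(4) by linarith
  qed
  have "0 \<le> phi p n N t \<and> phi p n N t \<le> 1"
  proof (induction N)
    case (Suc N)
    then show ?case
      using omegaN[of N] by (simp add: divide_simps algebra_simps)
  qed simp
  with omegaN show "0 \<le> phi p n N t" "phi p n N t \<le> 1"
    and "1 \<le> omegaN p n N t" "2 * t * omegaN p n N t < 1"
    by auto
qed

section \<open>Means and \<open>p\<close>-norms\<close>

lemma abs_le_pnorm:
  assumes "1 \<le> p" "j < n"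
  shows "\<bar>y j\<bar> \<le> pnorm p n y"
proof (cases p)
  case (real q)
  with assms have q: "1 \<le> q"
    by simp
  have "\<bar>y j\<bar> powr q \<le> (\<Sum>i<n. \<bar>y i\<bar> powr q)"
    using assms by (intro member_le_sum) auto
  then have "(\<bar>y j\<bar> powr q) powr (1 / q) \<le> (\<Sum>i<n. \<bar>y i\<bar> powr q) powr (1 / q)"
    using q by (intro powr_mono2) auto
  then show ?thesis
    using q real by (simp add: pnorm_def powr_powr)
qed (use assms in \<open>auto simp: pnorm_def\<close>)

lemma sum_le_power_mean_pos:
  fixes a :: "'b \<Rightarrow> real"
  assumes "finite S" "S \<noteq> {}" "\<And>j. j \<in> S \<Longrightarrow> 0 < a j" "1 \<le> q"
  shows "sum a S \<le> real (card S) powr (1 - 1 / q) * (\<Sum>j\<in>S. a j powr q) powr (1 / q)"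
proof -
  define k where "k = real (card S)"
  have k: "0 < k"
    using assms by (simp add: k_def card_gt_0_iff)
  have "(\<Sum>j\<in>S. (1 / k) *\<^sub>R a j) powr q \<le> (\<Sum>j\<in>S. (1 / k) * a j powr q)"
    by (rule convex_on_sum[where C = "{0<..}"]) (use assms k in \<open>auto simp: powr_convex k_def\<close>)
  then have "(sum a S / k) powr q \<le> (\<Sum>j\<in>S. a j powr q) / k"
    by (simp add: sum_distrib_left sum_divide_distrib)
  then have "((sum a S / k) powr q) powr (1 / q) \<le> ((\<Sum>j\<in>S. a j powr q) / k) powr (1 / q)"
    using assms by (intro powr_mono2) auto
  moreover have "((sum a S / k) powr q) powr (1 / q) = sum a S / k"
    using assms k by (simp add: powr_powr sum_nonneg less_imp_le)
  ultimately have "sum a S / k \<le> (\<Sum>j\<in>S. a j powr q) powr (1 / q) / k powr (1 / q)"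
    using k assms by (simp add: powr_divide sum_nonneg)
  then have "sum a S \<le> (k / k powr (1 / q)) * (\<Sum>j\<in>S. a j powr q) powr (1 / q)"
    using k by (simp add: divide_simps mult.commute)
  also have "k / k powr (1 / q) = k powr (1 - 1 / q)"
    using k by (simp add: powr_diff)
  finally show ?thesis
    by (simp add: k_def)
qed

lemma sum_le_power_mean:
  fixes a :: "'b \<Rightarrow> real"
  assumes "finite S" "\<And>j. j \<in> S \<Longrightarrow> 0 \<le> a j" "1 \<le> q"
  shows "sum a S \<le> real (card S) powr (1 - 1 / q) * (\<Sum>j\<in>S. a j powr q) powr (1 / q)"
proof -
  define S' where "S' = {j\<in>S. 0 < a j}"
  have S': "finite S'" "S' \<subseteq> S"
    using assms by (auto simp: S'_def)
  have sum_eq: "sum a S = sum a S'" "(\<Sum>j\<in>S. a j powr q) = (\<Sum>j\<in>S'. a j powr q)"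
    unfolding S'_def using assms by (intro sum.mono_neutral_right; force)+
  show ?thesis
  proof (cases "S' = {}")
    case False
    have "sum a S' \<le> real (card S') powr (1 - 1 / q) * (\<Sum>j\<in>S'. a j powr q) powr (1 / q)"
      by (rule sum_le_power_mean_pos) (use S' False assms in \<open>auto simp: S'_def\<close>)
    also have "\<dots> \<le> real (card S) powr (1 - 1 / q) * (\<Sum>j\<in>S'. a j powr q) powr (1 / q)"
      using assms S' card_mono[OF assms(1) S'(2)] by (intro mult_right_mono powr_mono2) auto
    finally show ?thesis
      using sum_eq by simp
  qed (use sum_eq in simp)
qed

lemma mean_le_pnorm_div_cp:
  assumes "1 \<le> p" "2 \<le> n" "i < n" "\<And>j. j < n \<Longrightarrow> 0 \<le> u j"
  shows "(\<Sum>j\<in>{..<n} - {i}. u j) / (real n - 1) \<le> pnorm p n u / cp p n"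
proof (cases p)
  case (real q)
  let ?S = "{..<n} - {i}"
  have q: "1 \<le> q"
    using assms real by simp
  have m: "real (card ?S) = real n - 1" "1 \<le> real n - 1"
    using assms by auto
  have "(\<Sum>j\<in>?S. u j powr q) = (\<Sum>j\<in>?S. \<bar>u j\<bar> powr q)"
    using assms by (intro sum.cong) auto
  also have "\<dots> \<le> (\<Sum>j<n. \<bar>u j\<bar> powr q)"
    by (intro sum_mono2) auto
  finally have "(\<Sum>j\<in>?S. u j powr q) \<le> (\<Sum>j<n. \<bar>u j\<bar> powr q)" .
  then have "(\<Sum>j\<in>?S. u j powr q) powr (1 / q) \<le> pnorm p n u"
    using q real by (auto simp: pnorm_def intro!: powr_mono2 sum_nonneg)
  then have "(\<Sum>j\<in>?S. u j) \<le> (real n - 1) powr (1 - 1 / q) * pnorm p n u"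
    using sum_le_power_mean[of ?S u q] q assms m by (auto intro: order.trans mult_left_mono)
  then have "(\<Sum>j\<in>?S. u j) / (real n - 1) \<le> (real n - 1) powr (1 - 1 / q) / (real n - 1) * pnorm p n u"
    using m by (simp add: divide_right_mono)
  also have "(real n - 1) powr (1 - 1 / q) / (real n - 1) = 1 / (real n - 1) powr (1 / q)"
    using m by (simp add: powr_diff)
  finally show ?thesis
    using real by (simp add: cp_def)
next
  case PInf
  have "(\<Sum>j\<in>{..<n} - {i}. u j) \<le> (\<Sum>j\<in>{..<n} - {i}. pnorm p n u)"
    using abs_le_pnorm[OF assms(1), of _ n u] assms by (intro sum_mono) auto
  then show ?thesis
    using PInf assms by (simp add: cp_def divide_simps mult.commute)
qed (use assms in simp)

lemma prod_le_mean_power: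
  fixes a :: "'b \<Rightarrow> real"
  assumes "finite S" "\<And>j. j \<in> S \<Longrightarrow> 0 \<le> a j"
  shows "(\<Prod>j\<in>S. a j) \<le> ((\<Sum>j\<in>S. a j) / card S) ^ card S"
proof (cases "S = {}")
  case False
  let ?k = "card S"
  have k: "0 < ?k"
    using False assms(1) by (simp add: card_gt_0_iff)
  have "prod a S = (prod a S powr (1 / ?k)) ^ ?k"
  proof (cases "prod a S = 0")
    case False
    then have "0 < prod a S"
      using assms by (simp add: prod_nonneg order_less_le)
    then show ?thesis
      using k by (simp add: powr_realpow[symmetric] powr_powr)
  qed (use k in simp)
  also have "\<dots> \<le> (\<Sum>j\<in>S. a j / ?k) ^ ?k"
    using assms False by (intro power_mono arith_geom_mean) auto
  finally show ?thesis
    by (simp add: sum_divide_distrib)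
qed simp

lemma prod_one_plus_le_pnorm_power:
  assumes "1 \<le> p" "2 \<le> n" "i < n" "\<And>j. j < n \<Longrightarrow> 0 \<le> u j" "0 \<le> c"
  shows "(\<Prod>j\<in>{..<n} - {i}. 1 + c * u j) \<le> (1 + pnorm p n u * c / cp p n) ^ (n - 1)"
proof -
  let ?S = "{..<n} - {i}"
  let ?mean = "(\<Sum>j\<in>?S. u j) / (real n - 1)"
  have card: "card ?S = n - 1" "real (n - 1) = real n - 1"
    using assms by auto
  have "(\<Prod>j\<in>?S. 1 + c * u j) \<le> ((\<Sum>j\<in>?S. 1 + c * u j) / card ?S) ^ card ?S"
    using assms by (intro prod_le_mean_power) auto
  also have "(\<Sum>j\<in>?S. 1 + c * u j) / card ?S = 1 + c * ?mean"
    using assms card by (simp add: sum.distrib sum_distrib_left[symmetric] field_simps)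
  also have "(1 + c * ?mean) ^ card ?S \<le> (1 + c * (pnorm p n u / cp p n)) ^ (n - 1)"
  proof -
    have "?mean \<le> pnorm p n u / cp p n"
      using assms by (intro mean_le_pnorm_div_cp) auto
    then have "c * ?mean \<le> c * (pnorm p n u / cp p n)"
      using assms(5) by (rule mult_left_mono)
    moreover have "0 \<le> c * ?mean"
      using assms by (auto intro!: mult_nonneg_nonneg divide_nonneg_nonneg sum_nonneg)
    ultimately show ?thesis
      unfolding card(1) by (intro power_mono) linarith+
  qed
  finally show ?thesis
    by (simp add: mult.commute)
qed

section \<open>Simple roots\<close>

lemma infinite_UNIV_alg_closed_field: "infinite (UNIV :: 'a::alg_closed_field set)"
proof
  assume fin: "finite (UNIV :: 'a set)"
  define P where "P = (\<Prod>a\<in>(UNIV :: 'a set). [:-a, 1:])"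
  have "2 \<le> card (UNIV :: 'a set)"
    using card_mono[OF fin, of "{0, 1}"] by simp
  moreover have "degree P = card (UNIV :: 'a set)"
    unfolding P_def by (subst degree_prod_eq_sum_degree) auto
  ultimately have "degree (P + 1) > 0"
    by (subst degree_add_eq_left) auto
  then obtain z where "poly (P + 1) z = 0"
    using alg_closed_imp_poly_has_root by blast
  moreover have "poly P z = 0"
    unfolding P_def poly_prod using fin by (simp add: prod_zero_iff)
  ultimately show False
    by simp
qed

lemma poly_root_vector_eq:
  fixes f :: "'a::field poly" and \<xi> :: "nat \<Rightarrow> 'a"
  assumes "infinite (UNIV :: 'a set)" "\<forall>z. poly f z = lead_coeff f * (\<Prod>i<n. z - \<xi> i)"
  shows "f = smult (lead_coeff f) (\<Prod>i<n. [:- \<xi> i, 1:])"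
proof (rule ccontr)
  let ?g = "smult (lead_coeff f) (\<Prod>i<n. [:- \<xi> i, 1:])"
  assume "f \<noteq> ?g"
  then have "finite {z. poly (f - ?g) z = 0}"
    by (intro poly_roots_finite) auto
  moreover have "poly (f - ?g) z = 0" for z
    using assms(2) by (simp add: poly_prod)
  ultimately show False
    using assms(1) by simp
qed

lemma order_root_vector_eq_1:
  fixes f :: "'a::alg_closed_field poly" and \<xi> :: "nat \<Rightarrow> 'a"
  assumes "\<forall>z. poly f z = lead_coeff f * (\<Prod>i<n. z - \<xi> i)" "f \<noteq> 0"
    and "\<forall>i<n. \<forall>j<n. i \<noteq> j \<longrightarrow> \<xi> i \<noteq> \<xi> j" "poly f z = 0"
  shows "order z f = 1"
proof -
  have "(\<Prod>i<n. z - \<xi> i) = 0"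
    using assms(1,2,4) by simp
  then have "\<exists>k\<in>{..<n}. z = \<xi> k"
    by simp
  then obtain k where k: "k < n" "z = \<xi> k"
    by blast
  define h where "h = (\<Prod>i\<in>{..<n} - {k}. [:- \<xi> i, 1:])"
  have h: "h \<noteq> 0" "poly h z \<noteq> 0"
    using assms(3) k by (auto simp: h_def poly_prod)
  have "f = smult (lead_coeff f) ([:- \<xi> k, 1:] * h)"
    using poly_root_vector_eq[OF infinite_UNIV_alg_closed_field assms(1)] k
    by (simp add: h_def prod.remove[of "{..<n}" k])
  then have "order z f = order z (smult (lead_coeff f) ([:- \<xi> k, 1:] * h))"
    by (rule arg_cong)
  also have "\<dots> = order z ([:- \<xi> k, 1:] * h)"
    using assms(2) by (simp add: order_smult)
  also have "\<dots> = order z [:- \<xi> k, 1:] + order z h"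
    using h by (intro order_mult) (simp del: mult_pCons_left)
  also have "\<dots> = 1"
    using order_power_n_n[of "\<xi> k" 1] k h by (simp add: order_eq_0_iff)
  finally show ?thesis .
qed

section \<open>The Weierstrass iteration\<close>

lemma WT_Suc_minus_root:
  fixes f :: "'a::field poly"
  assumes root_vector: "\<forall>z. poly f z = lead_coeff f * (\<Prod>i<degree f. z - \<xi> i)"
    and i: "i < degree f"
    and sep: "\<And>j. j \<in> {..<degree f} - {i} \<Longrightarrow> x i \<noteq> WT f M x j"
  shows "WT f (Suc M) x i - \<xi> i = (x i - \<xi> i) *
    (1 - (\<Prod>j\<in>{..<degree f} - {i}. 1 + (WT f M x j - \<xi> j) / (x i - WT f M x j)))"
proof -
  let ?S = "{..<degree f} - {i}" and ?y = "WT f M x"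
  have lc: "lead_coeff f \<noteq> 0"
    using i by auto
  have y: "(\<Prod>j\<in>?S. x i - ?y j) \<noteq> 0"
    using sep by simp
  have "poly f (x i) = lead_coeff f * ((x i - \<xi> i) * (\<Prod>j\<in>?S. x i - \<xi> j))"
    using root_vector i by (simp add: prod.remove[of "{..<degree f}" i])
  moreover have "(\<Prod>j\<in>?S. 1 + (?y j - \<xi> j) / (x i - ?y j))
      = (\<Prod>j\<in>?S. x i - \<xi> j) / (\<Prod>j\<in>?S. x i - ?y j)"
    unfolding prod_dividef[symmetric] using sep by (intro prod.cong) (auto simp: field_simps)
  ultimately show ?thesis
    using lc y by (simp add: field_simps)
qed

lemma WT_Suc_error_le:
  fixes f :: "'a::field poly"
  assumes nm: "abs_value nm"
    and root_vector: "\<forall>z. poly f z = lead_coeff f * (\<Prod>i<degree f. z - \<xi> i)"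
    and i: "i < degree f"
    and sep: "\<And>j. j \<in> {..<degree f} - {i} \<Longrightarrow> x i \<noteq> WT f M x j"
    and close: "\<And>j. j \<in> {..<degree f} - {i} \<Longrightarrow>
      nm (WT f M x j - \<xi> j) \<le> c j * nm (x i - WT f M x j)"
  shows "nm (WT f (Suc M) x i - \<xi> i)
    \<le> ((\<Prod>j\<in>{..<degree f} - {i}. 1 + c j) - 1) * nm (x i - \<xi> i)"
proof -
  let ?S = "{..<degree f} - {i}" and ?y = "WT f M x"
  define v where "v j = (?y j - \<xi> j) / (x i - ?y j)" for j
  have "nm (WT f (Suc M) x i - \<xi> i) = nm ((\<Prod>j\<in>?S. 1 + v j) - 1) * nm (x i - \<xi> i)"
    using WT_Suc_minus_root[OF root_vector i sep] abs_value_mult[OF nm]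
      abs_value_minus_commute[OF nm, of 1]
    by (simp add: v_def mult.commute)
  also have "nm ((\<Prod>j\<in>?S. 1 + v j) - 1) \<le> (\<Prod>j\<in>?S. 1 + nm (v j)) - 1"
    by (rule abs_value_prod_one_plus_minus_one_le[OF nm]) simp
  also have "(\<Prod>j\<in>?S. 1 + nm (v j)) \<le> (\<Prod>j\<in>?S. 1 + c j)"
  proof (rule prod_mono)
    fix j
    assume j: "j \<in> ?S"
    have "0 < nm (x i - ?y j)"
      using sep[OF j] abs_value_pos[OF nm] by simp
    then have "nm (v j) \<le> c j"
      using close[OF j] by (simp add: v_def abs_value_divide[OF nm] divide_simps)
    then show "0 \<le> 1 + nm (v j) \<and> 1 + nm (v j) \<le> 1 + c j"
      using abs_value_nonneg[OF nm, of "v j"] by simp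
  qed
  finally show ?thesis
    using abs_value_nonneg[OF nm] by (simp add: mult_right_mono)
qed

locale weierstrass_start =
  fixes nm :: "'a::field \<Rightarrow> real" and f :: "'a poly" and \<xi> x :: "nat \<Rightarrow> 'a" and p :: ereal
  assumes abs_value: "abs_value nm"
    and degree_ge_2: "2 \<le> degree f"
    and root_vector: "\<forall>z. poly f z = lead_coeff f * (\<Prod>i<degree f. z - \<xi> i)"
    and p_ge_1: "1 \<le> p"
    and distinct: "\<forall>i<degree f. \<forall>j<degree f. i \<noteq> j \<longrightarrow> x i \<noteq> x j"
    and Err_le_Rbound: "Err nm p (degree f) \<xi> x \<le> Rbound p (degree f)"
begin

abbreviation "n \<equiv> degree f"
abbreviation "E \<equiv> Err nm p n \<xi> x"
abbreviation "d \<equiv> dist_i nm n x"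

definition u :: "nat \<Rightarrow> real" where
  "u j = nm (x j - \<xi> j) / d j"

lemma d_pos: "j < n \<Longrightarrow> 0 < d j"
  using dist_i_pos[OF abs_value degree_ge_2] distinct by auto

lemma d_le: "j < n \<Longrightarrow> k < n \<Longrightarrow> k \<noteq> j \<Longrightarrow> d j \<le> nm (x k - x j)"
  using dist_i_le abs_value_minus_commute[OF abs_value] by metis

lemma u_nonneg: "j < n \<Longrightarrow> 0 \<le> u j"
  using d_pos[of j] abs_value_nonneg[OF abs_value, of "x j - \<xi> j"] by (simp add: u_def)

lemma error_eq: "j < n \<Longrightarrow> nm (x j - \<xi> j) = u j * d j"
  using d_pos[of j] by (simp add: u_def)

lemma E_eq_pnorm: "E = pnorm p n u"
  by (simp add: Err_def u_def [abs_def])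

lemma u_le_E: "j < n \<Longrightarrow> u j \<le> E"
  using abs_le_pnorm[OF p_ge_1, of j n u] u_nonneg[of j] E_eq_pnorm by simp

lemma E_nonneg: "0 \<le> E"
  using u_le_E[of 0] u_nonneg[of 0] degree_ge_2 by simp

lemma Psi_E_le_2: "Psi p n E \<le> 2"
  using Psi_le_2[OF p_ge_1 degree_ge_2 E_nonneg Err_le_Rbound] .

lemmas phi_omegaN_E = phi_omegaN_bounds[OF p_ge_1 degree_ge_2 E_nonneg Psi_E_le_2]

lemma two_E_less_1: "2 * E < 1"
  using phi_omegaN_E(3,4)[of 0] E_nonneg mult_left_mono[of 1 "omegaN p n 0 E" "2 * E"]
  by linarith

lemma roots_distinct:
  assumes "i < n" "j < n" "i \<noteq> j"
  shows "\<xi> i \<noteq> \<xi> j"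
proof
  assume eq: "\<xi> i = \<xi> j"
  have "0 < nm (x i - x j)"
    using distinct assms abs_value_pos[OF abs_value] by simp
  have "nm (x i - x j) \<le> nm (x i - \<xi> i) + nm (\<xi> j - x j)"
    using abs_value_diff_triangle[OF abs_value, of "x i" "x j" "\<xi> j"] eq by simp
  also have "\<dots> = u i * d i + u j * d j"
    using error_eq assms abs_value_minus_commute[OF abs_value, of "\<xi> j"] by simp
  also have "\<dots> \<le> E * nm (x j - x i) + E * nm (x i - x j)"
    using assms u_le_E u_nonneg d_le d_pos[OF assms(1)] d_pos[OF assms(2)] E_nonneg
    by (intro add_mono mult_mono) auto
  also have "\<dots> = 2 * E * nm (x i - x j)"
    using abs_value_minus_commute[OF abs_value, of "x j"] by simp
  also have "\<dots> < nm (x i - x j)"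
    using two_E_less_1 \<open>0 < nm (x i - x j)\<close> by simp
  finally show False
    by simp
qed

definition iterate_invariant :: "nat \<Rightarrow> bool" where
  "iterate_invariant M \<longleftrightarrow> x \<in> WD f M \<and>
    (\<forall>j<n. \<forall>i<n. i \<noteq> j \<longrightarrow> nm (WT f M x j - \<xi> j) \<le> phi p n M E * u j * nm (x i - WT f M x j))"

lemma iterate_invariant_0: "iterate_invariant 0"
  using error_eq d_le u_nonneg by (auto simp: iterate_invariant_def mult_left_mono)

lemma x_ne_WT_if_invariant:
  assumes inv: "iterate_invariant M" and ij: "j < n" "i < n" "i \<noteq> j"
  shows "x i \<noteq> WT f M x j"
proof
  assume eq: "x i = WT f M x j"
  have "nm (WT f M x j - \<xi> j) \<le> phi p n M E * u j * nm (x i - WT f M x j)"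
    using inv ij by (simp add: iterate_invariant_def)
  then have "nm (WT f M x j - \<xi> j) \<le> 0"
    using eq abs_value_eq_0_iff[OF abs_value, of 0] by simp
  then have "x i = \<xi> j"
    using eq abs_value_nonneg[OF abs_value] abs_value_eq_0_iff[OF abs_value] by (metis antisym eq_iff_diff_eq_0)
  have "0 < nm (x j - x i)"
    using distinct ij abs_value_pos[OF abs_value] by simp
  have "nm (x j - x i) = u j * d j"
    using error_eq[OF ij(1)] \<open>x i = \<xi> j\<close> by simp
  also have "\<dots> \<le> u j * nm (x j - x i)"
    using d_le[of j i] ij u_nonneg abs_value_minus_commute[OF abs_value, of "x i"]
    by (intro mult_left_mono) auto
  also have "\<dots> < nm (x j - x i)"
    using u_le_E[OF ij(1)] two_E_less_1 E_nonneg \<open>0 < nm (x j - x i)\<close> by simp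
  finally show False
    by simp
qed

lemma WD_Suc_if_invariant: "iterate_invariant M \<Longrightarrow> x \<in> WD f (Suc M)"
  using x_ne_WT_if_invariant by (auto simp: iterate_invariant_def)

lemma WT_Suc_error_le_if_invariant:
  assumes inv: "iterate_invariant M" and i: "i < n"
  shows "nm (WT f (Suc M) x i - \<xi> i) \<le> (omegaN p n M E - 1) * nm (x i - \<xi> i)"
proof -
  have "nm (WT f (Suc M) x i - \<xi> i)
      \<le> ((\<Prod>j\<in>{..<n} - {i}. 1 + phi p n M E * u j) - 1) * nm (x i - \<xi> i)"
    using inv i x_ne_WT_if_invariant[OF inv]
    by (intro WT_Suc_error_le[OF abs_value root_vector]) (auto simp: iterate_invariant_def)
  also have "(\<Prod>j\<in>{..<n} - {i}. 1 + phi p n M E * u j) \<le> omegaN p n M E"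
    using prod_one_plus_le_pnorm_power[OF p_ge_1 degree_ge_2 i, of u "phi p n M E"]
      u_nonneg phi_omegaN_E(1)
    by (simp add: omegaN.simps E_eq_pnorm)
  finally show ?thesis
    using abs_value_nonneg[OF abs_value] by (simp add: mult_right_mono)
qed

lemma dist_x_WT_Suc_ge:
  assumes inv: "iterate_invariant M" and ij: "j < n" "i < n" "i \<noteq> j"
  shows "(1 - 2 * E * omegaN p n M E) * d j \<le> nm (x i - WT f (Suc M) x j)"
proof -
  let ?z = "WT f (Suc M) x j" and ?w = "omegaN p n M E"
  have "d j \<le> nm (x i - ?z) + nm (?z - \<xi> j) + nm (\<xi> j - x j)"
    using d_le[OF ij(1,2,3)] abs_value_diff_triangle[OF abs_value, of "x i" "x j" ?z]
      abs_value_diff_triangle[OF abs_value, of ?z "x j" "\<xi> j"] by linarith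
  moreover have "nm (?z - \<xi> j) + nm (\<xi> j - x j) \<le> ?w * (u j * d j)"
    using WT_Suc_error_le_if_invariant[OF inv ij(1)] error_eq[OF ij(1)]
      abs_value_minus_commute[OF abs_value, of "\<xi> j"] by (simp add: algebra_simps)
  moreover have "?w * (u j * d j) \<le> 2 * E * ?w * d j"
    using u_le_E[OF ij(1)] E_nonneg d_pos[OF ij(1)] phi_omegaN_E(3)[of M]
    by (simp add: mult_left_mono mult_right_mono mult.assoc mult.left_commute)
  ultimately show ?thesis
    by (simp add: algebra_simps)
qed

lemma iterate_invariant_Suc:
  assumes inv: "iterate_invariant M"
  shows "iterate_invariant (Suc M)"
proof -
  let ?w = "omegaN p n M E"
  have "nm (WT f (Suc M) x j - \<xi> j) \<le> phi p n (Suc M) E * u j * nm (x i - WT f (Suc M) x j)"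
    if ij: "j < n" "i < n" "i \<noteq> j" for i j
  proof -
    have pos: "0 < 1 - 2 * E * ?w" and "1 \<le> ?w"
      using phi_omegaN_E(3,4)[of M] by auto
    have "nm (WT f (Suc M) x j - \<xi> j) \<le> (?w - 1) * (u j * d j)"
      using WT_Suc_error_le_if_invariant[OF inv ij(1)] error_eq[OF ij(1)] by simp
    also have "\<dots> = phi p n (Suc M) E * u j * ((1 - 2 * E * ?w) * d j)"
      using pos by simp
    also have "\<dots> \<le> phi p n (Suc M) E * u j * nm (x i - WT f (Suc M) x j)"
    proof (rule mult_left_mono[OF dist_x_WT_Suc_ge[OF inv ij]])
      show "0 \<le> phi p n (Suc M) E * u j"
        using phi_omegaN_E(1)[of "Suc M"] u_nonneg[OF ij(1)] by (rule mult_nonneg_nonneg)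
    qed
    finally show ?thesis .
  qed
  then show ?thesis
    using WD_Suc_if_invariant[OF inv] by (auto simp: iterate_invariant_def)
qed

lemma iterate_invariant: "iterate_invariant M"
  by (induction M) (use iterate_invariant_0 iterate_invariant_Suc in auto)

lemma WD_and_WT_error_le:
  assumes "1 \<le> N"
  shows "x \<in> WD f N \<and> (\<forall>i<n. nm (WT f N x i - \<xi> i) \<le> beta p n N E * nm (x i - \<xi> i))"
proof -
  obtain M where "N = Suc M"
    using assms by (cases N) auto
  then show ?thesis
    using WD_Suc_if_invariant WT_Suc_error_le_if_invariant iterate_invariant
    by (simp add: beta_def)
qed

end

theorem lemma2p9:
  fixes nm :: "'a::alg_closed_field \<Rightarrow> real"
    and f :: "'a poly" and \<xi> x :: "nat \<Rightarrow> 'a" and N :: nat and p :: ereal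
  assumes "abs_value nm"
    and "degree f \<ge> 2"
    and "\<forall>z. poly f z = lead_coeff f * (\<Prod>i<degree f. (z - \<xi> i))"
    and "N \<ge> 1"
    and "1 \<le> p"
    and "\<forall>i<degree f. \<forall>j<degree f. i \<noteq> j \<longrightarrow> x i \<noteq> x j"
    and "Err nm p (degree f) \<xi> x \<le> Rbound p (degree f)"
  shows "(\<forall>z. poly f z = 0 \<longrightarrow> order z f = 1)
    \<and> x \<in> WD f N
    \<and> (\<forall>i<degree f. nm (WT f N x i - \<xi> i)
          \<le> beta p (degree f) N (Err nm p (degree f) \<xi> x) * nm (x i - \<xi> i))"
proof -
  interpret weierstrass_start nm f \<xi> x p
    using assms(1-3,5-7) by unfold_locales
  have "f \<noteq> 0"
    using assms(2) by auto
  then have "\<forall>z. poly f z = 0 \<longrightarrow> order z f = 1"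
    using order_root_vector_eq_1[OF root_vector] roots_distinct by blast
  then show ?thesis
    using WD_and_WT_error_le[OF assms(4)] by blast
qed

end
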